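(* Let $N_1,N_2,N_w,N_b,N$ and $T$ be as in the context. For a vector $c=(c_0,\dots,c_{N_w})\in\mathbb{R}^{N_w+1}$ define $b=(b_0,\dots,b_{N_w})$ by the polynomial identity $$\sum_{i=0}^{N_w}c_i\,x^iy^{N_1-i}z^{N_w-i}=\sum_{i=0}^{N_w}b_i\,(x-yz)^i\,y^{N_1-i}z^{N_w-i},$$ equivalently $b_j=\sum_{i=j}^{N_w}\binom{i}{j}c_i$ (an invertible linear map, with inverse $c_i=\sum_{j=i}^{N_w}(-1)^{j-i}\binom{j}{i}b_j$). Then $Tc=\lambda c$ holds if and only if, for all $i=0,\dots,N_w$ (with $b_{-1}:=0$), $$N_1N_2(\lambda-1)\,b_i=(N_1-i+1)(N_w-i+1)\,b_{i-1}-i\,(N_w-i+N_b+1)\,b_i .$$ In particular, $T$ is similar to a lower triangular matrix with diagonal entries $1-\frac{i(N_w+N_b+1-i)}{N_1N_2}$, $i=0,\dots,N_w$.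
   Context: Integers $N_1,N_2\ge1$, $N_w,N_b\ge0$ with $N_w+N_b=N_1+N_2=:N$, $N_w\le N_1$, $N_w\le N_2$. States $i\in\{0,\dots,N_w\}$ (number of white balls in urn 1). $p_i=\frac{(N_1-i)(N_w-i)}{N_1N_2}$, $q_i=\frac{i(N_b-N_1+i)}{N_1N_2}$, $r_i=1-p_i-q_i$. $T$ is the $(N_w+1)\times(N_w+1)$ matrix with $T_{i+1,i}=p_i$, $T_{i-1,i}=q_i$, $T_{ii}=r_i$, other entries $0$ ($T_{ij}$ is the probability of moving from state $j$ to state $i$; columns sum to 1). *)

theory Defs
  imports "Jordan_Normal_Form.Matrix"
begin

definition p_coef :: "nat \<Rightarrow> nat \<Rightarrow> nat \<Rightarrow> nat \<Rightarrow> nat \<Rightarrow> real" where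
  "p_coef N1 N2 Nw Nb i = (real N1 - real i) * (real Nw - real i) / (real N1 * real N2)"

definition q_coef :: "nat \<Rightarrow> nat \<Rightarrow> nat \<Rightarrow> nat \<Rightarrow> nat \<Rightarrow> real" where
  "q_coef N1 N2 Nw Nb i = real i * (real Nb - real N1 + real i) / (real N1 * real N2)"

definition r_coef :: "nat \<Rightarrow> nat \<Rightarrow> nat \<Rightarrow> nat \<Rightarrow> nat \<Rightarrow> real" where
  "r_coef N1 N2 Nw Nb i = 1 - p_coef N1 N2 Nw Nb i - q_coef N1 N2 Nw Nb i"

text \<open>The (Nw+1) x (Nw+1) transition matrix, indices 0..Nw; entry (i,j) is the
  probability of moving from state j to state i.\<close>
definition T_mat :: "nat \<Rightarrow> nat \<Rightarrow> nat \<Rightarrow> nat \<Rightarrow> real mat" where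
  "T_mat N1 N2 Nw Nb = mat (Nw+1) (Nw+1) (\<lambda>(i,j).
      if i = j + 1 then p_coef N1 N2 Nw Nb j
      else if j = i + 1 then q_coef N1 N2 Nw Nb j
      else if i = j then r_coef N1 N2 Nw Nb j
      else 0)"

definition b_vec :: "nat \<Rightarrow> real vec \<Rightarrow> real vec" where
  "b_vec Nw c = vec (Nw+1) (\<lambda>j. \<Sum>i=j..Nw. real (i choose j) * c $ i)"

definition lower_triangular :: "'a::zero mat \<Rightarrow> bool" where
  "lower_triangular A \<longleftrightarrow> (\<forall>i < dim_row A. \<forall>j < dim_col A. i < j \<longrightarrow> A $$ (i,j) = 0)"

end

theory Submission
  imports Defs "Jordan_Normal_Form.Determinant"
begin

text \<open>Passing to the coordinates \<open>b = B c\<close> with the upper unitriangular binomial matrix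
  \<open>B = (j choose i)\<close> turns \<open>T\<close> into a lower bidiagonal matrix \<open>L\<close>, i.e. \<open>B T = L B\<close>.
  Entrywise this is a binomial identity that follows from Pascal's rule and the absorption
  identity \<open>k (n choose k) = n ((n - 1) choose (k - 1))\<close>. As \<open>det B = 1\<close>, \<open>T\<close> is similar
  to \<open>L\<close>, and \<open>T c = \<lambda> c\<close> iff \<open>L b = \<lambda> b\<close>, which row by row is the stated recurrence.\<close>

lemma inverse_mat_if_det_nonzero:
  fixes A :: "'a::field mat"
  assumes "A \<in> carrier_mat n n" and "det A \<noteq> 0"
  obtains B where "B \<in> carrier_mat n n" "B * A = 1\<^sub>m n" "A * B = 1\<^sub>m n"
  using det_non_zero_imp_unit[OF assms, unfolded Units_def, of "()"] that
  by (auto simp: ring_mat_def)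

lemma intertwining_similar_mat:
  fixes B T M :: "'a::field mat"
  assumes B: "B \<in> carrier_mat n n" "det B \<noteq> 0"
    and T: "T \<in> carrier_mat n n" and M: "M \<in> carrier_mat n n"
    and BT: "B * T = M * B"
  shows "similar_mat T M"
proof -
  obtain B' where B': "B' \<in> carrier_mat n n" "B' * B = 1\<^sub>m n" "B * B' = 1\<^sub>m n"
    using inverse_mat_if_det_nonzero[OF B] .
  have "B' * M * B = B' * (B * T)"
    using B B' M by (simp add: BT assoc_mult_mat[of _ n n _ n _ n])
  also have "\<dots> = T"
    using B B' T by (simp flip: assoc_mult_mat[of _ n n _ n _ n])
  finally have "similar_mat_wit T M B' B"
    using B B' T M by (intro similar_mat_witI) auto
  then show ?thesis unfolding similar_mat_def by blast
qed

lemma intertwining_eigenvector_iff: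
  fixes B T M :: "'a::field mat"
  assumes B: "B \<in> carrier_mat n n" "det B \<noteq> 0"
    and T: "T \<in> carrier_mat n n" and M: "M \<in> carrier_mat n n"
    and BT: "B * T = M * B" and c: "c \<in> carrier_vec n"
  shows "T *\<^sub>v c = lam \<cdot>\<^sub>v c \<longleftrightarrow> M *\<^sub>v (B *\<^sub>v c) = lam \<cdot>\<^sub>v (B *\<^sub>v c)"
proof -
  obtain B' where B': "B' \<in> carrier_mat n n" "B' * B = 1\<^sub>m n"
    using inverse_mat_if_det_nonzero[OF B] by blast
  have BTc: "M *\<^sub>v (B *\<^sub>v c) = B *\<^sub>v (T *\<^sub>v c)"
    using B T M c by (simp flip: BT assoc_mult_mat_vec)
  have Bc: "lam \<cdot>\<^sub>v (B *\<^sub>v c) = B *\<^sub>v (lam \<cdot>\<^sub>v c)"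
    using B c by (simp add: mult_mat_vec)
  have B_inj: "v = w"
    if "v \<in> carrier_vec n" "w \<in> carrier_vec n" "B *\<^sub>v v = B *\<^sub>v w" for v w
  proof -
    have "(B' * B) *\<^sub>v v = (B' * B) *\<^sub>v w"
      using that B(1) B'(1) by simp
    then show ?thesis using that B'(2) by simp
  qed
  show ?thesis
    unfolding BTc Bc using B_inj[of "T *\<^sub>v c" "lam \<cdot>\<^sub>v c"] T c by auto
qed

definition binomial_mat :: "nat \<Rightarrow> 'a::semiring_1 mat" where
  "binomial_mat n = mat n n (\<lambda>(i, j). of_nat (j choose i))"

lemma binomial_mat_carrier [simp]: "binomial_mat n \<in> carrier_mat n n"
  by (simp add: binomial_mat_def)

lemma det_binomial_mat: "det (binomial_mat n :: 'a::comm_ring_1 mat) = 1"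
proof -
  have "upper_triangular (binomial_mat n :: 'a mat)"
    by (auto simp: upper_triangular_def binomial_mat_def binomial_eq_0)
  then have "det (binomial_mat n :: 'a mat) = prod_list (diag_mat (binomial_mat n))"
    by (rule det_upper_triangular[OF _ binomial_mat_carrier])
  also have "diag_mat (binomial_mat n :: 'a mat) = replicate n 1"
    by (auto simp: diag_mat_def binomial_mat_def intro: nth_equalityI)
  finally show ?thesis by simp
qed

definition lower_bidiagonal_mat :: "nat \<Rightarrow> (nat \<Rightarrow> 'a) \<Rightarrow> (nat \<Rightarrow> 'a) \<Rightarrow> 'a::zero mat" where
  "lower_bidiagonal_mat n d e =
     mat n n (\<lambda>(i, k). if k = i then d i else if Suc k = i then e i else 0)"

lemma dim_lower_bidiagonal_mat [simp]:
  "dim_row (lower_bidiagonal_mat n d e) = n" "dim_col (lower_bidiagonal_mat n d e) = n"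
  by (simp_all add: lower_bidiagonal_mat_def)

lemma sum_lower_bidiagonal_mat_row:
  fixes f :: "nat \<Rightarrow> 'a::semiring_0"
  assumes "i < n"
  shows "(\<Sum>k = 0..<n. lower_bidiagonal_mat n d e $$ (i, k) * f k)
       = d i * f i + (if i = 0 then 0 else e i * f (i - 1))"
proof -
  have "(\<Sum>k = 0..<n. lower_bidiagonal_mat n d e $$ (i, k) * f k)
      = (\<Sum>k = 0..<n. (if k = i then d i * f i else 0) + (if Suc k = i then e i * f (i - 1) else 0))"
    using assms by (intro sum.cong) (auto simp: lower_bidiagonal_mat_def)
  then show ?thesis
    using assms by (cases i) (simp_all add: sum.distrib sum.delta')
qed

lemma lower_bidiagonal_mat_mult_vec:
  fixes v :: "'a::semiring_0 vec"
  assumes "v \<in> carrier_vec n" and "i < n"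
  shows "(lower_bidiagonal_mat n d e *\<^sub>v v) $ i = d i * v $ i + (if i = 0 then 0 else e i * v $ (i - 1))"
proof -
  have "(lower_bidiagonal_mat n d e *\<^sub>v v) $ i = (\<Sum>k = 0..<n. lower_bidiagonal_mat n d e $$ (i, k) * v $ k)"
    using assms by (auto simp: scalar_prod_def intro: sum.cong)
  also have "\<dots> = d i * v $ i + (if i = 0 then 0 else e i * v $ (i - 1))"
    by (rule sum_lower_bidiagonal_mat_row[OF assms(2)])
  finally show ?thesis .
qed

lemma eigen_equation_clear_denominator:
  fixes D X Y x y lam :: real
  assumes "D \<noteq> 0"
  shows "(1 - X / D) * x + Y / D * y = lam * x \<longleftrightarrow> D * (lam - 1) * x = Y * y - X * x"
proof -
  have "(1 - X / D) * x + Y / D * y = (D * x - X * x + Y * y) / D"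
    using assms by (simp add: field_simps)
  then show ?thesis
    using assms by (auto simp: divide_eq_eq algebra_simps)
qed

text \<open>Entry \<open>(i, j)\<close> of \<open>B T = L B\<close>, multiplied by \<open>N1 N2\<close>, with \<open>(j choose i)\<close> subtracted on both sides.\<close>

lemma binomial_urn_identity:
  fixes N1 Nw Nb i j :: nat
  shows "real (Suc j choose i) * ((real N1 - real j) * (real Nw - real j))
       + real ((j - 1) choose i) * (real j * (real Nb - real N1 + real j))
       - real (j choose i) * ((real N1 - real j) * (real Nw - real j) + real j * (real Nb - real N1 + real j))
     = (if i = 0 then 0 else (real N1 - real i + 1) * (real Nw - real i + 1) * real (j choose (i - 1)))
       - real i * (real Nw + real Nb + 1 - real i) * real (j choose i)"
    (is "?lhs = ?rhs")
proof (cases i)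
  case 0
  then show ?thesis by (simp add: algebra_simps)
next
  case (Suc u)
  define P Q where "P = (real N1 - real j) * (real Nw - real j)" and "Q = real Nb - real N1 + real j"
  have pascal: "real j * real ((j - 1) choose i) - real j * real (j choose i) = - (real j * real ((j - 1) choose u))"
    using Suc by (cases j) (simp_all add: algebra_simps)
  have absorb: "real j * real ((j - 1) choose u) = real i * real (j choose i)"
    using Suc binomial_absorption[of u j] by (metis of_nat_mult)
  have absorb_comp: "real i * real (j choose i) = (real j - real u) * real (j choose u)"
  proof (cases "u \<le> j")
    case True
    have "Suc u * (j choose Suc u) = (j - u) * (j choose u)"
      using binomial_absorption[of u j] binomial_absorb_comp[of j u] by simp
    then have "real (Suc u * (j choose Suc u)) = real ((j - u) * (j choose u))"
      by (rule arg_cong)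
    then show ?thesis using True Suc by (simp add: of_nat_diff algebra_simps)
  next
    case False
    then show ?thesis using Suc by (simp add: binomial_eq_0)
  qed
  have "?lhs = real (j choose u) * P + Q * (real j * real ((j - 1) choose i) - real j * real (j choose i))"
    using Suc unfolding P_def Q_def by (simp add: algebra_simps)
  also have "\<dots> = real (j choose u) * P - Q * (real j * real ((j - 1) choose u))"
    unfolding pascal by simp
  also have "\<dots> = (P - Q * (real j - real u)) * real (j choose u)"
    unfolding absorb absorb_comp by (simp add: algebra_simps)
  also have "\<dots> = (real N1 - real u) * (real Nw - real u) * real (j choose u)
      - (real Nw + real Nb - real u) * ((real j - real u) * real (j choose u))"
    unfolding P_def Q_def by (simp add: algebra_simps)
  also have "\<dots> = ?rhs"
    unfolding absorb_comp[symmetric] using Suc by (simp add: algebra_simps)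
  finally show ?thesis .
qed

text \<open>The terms \<open>f (Suc Nw)\<close> and \<open>f (0 - 1)\<close> lie outside the state space, but their weights
  \<open>p_Nw\<close> and \<open>q_0\<close> vanish.\<close>

lemma sum_mult_T_mat_col:
  fixes f :: "nat \<Rightarrow> real"
  assumes "j \<le> Nw"
  shows "(\<Sum>k = 0..<Nw + 1. f k * T_mat N1 N2 Nw Nb $$ (k, j))
       = f j * r_coef N1 N2 Nw Nb j + f (Suc j) * p_coef N1 N2 Nw Nb j
         + f (j - 1) * q_coef N1 N2 Nw Nb j"
proof -
  have "(\<Sum>k = 0..<Nw + 1. f k * T_mat N1 N2 Nw Nb $$ (k, j))
      = (\<Sum>k = 0..<Nw + 1. (if k = j then f j * r_coef N1 N2 Nw Nb j else 0)
          + (if k = Suc j then f (Suc j) * p_coef N1 N2 Nw Nb j else 0)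
          + (if Suc k = j then f (j - 1) * q_coef N1 N2 Nw Nb j else 0))"
    using assms by (intro sum.cong) (auto simp: T_mat_def)
  moreover have "p_coef N1 N2 Nw Nb Nw = 0" "q_coef N1 N2 Nw Nb 0 = 0"
    by (simp_all add: p_coef_def q_coef_def)
  ultimately show ?thesis
    using assms by (cases j) (auto simp: sum.distrib sum.delta' le_less)
qed

definition urn_lower_mat :: "nat \<Rightarrow> nat \<Rightarrow> nat \<Rightarrow> nat \<Rightarrow> real mat" where
  "urn_lower_mat N1 N2 Nw Nb = lower_bidiagonal_mat (Nw + 1)
     (\<lambda>i. 1 - real i * (real Nw + real Nb + 1 - real i) / (real N1 * real N2))
     (\<lambda>i. (real N1 - real i + 1) * (real Nw - real i + 1) / (real N1 * real N2))"

lemma binomial_weighted_T_mat_col: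
  assumes "real N1 * real N2 \<noteq> 0"
  shows "real (j choose i) * r_coef N1 N2 Nw Nb j + real (Suc j choose i) * p_coef N1 N2 Nw Nb j
         + real ((j - 1) choose i) * q_coef N1 N2 Nw Nb j
       = (1 - real i * (real Nw + real Nb + 1 - real i) / (real N1 * real N2)) * real (j choose i)
         + (if i = 0 then 0
            else (real N1 - real i + 1) * (real Nw - real i + 1) / (real N1 * real N2) * real (j choose (i - 1)))"
proof -
  define D P Q where "D = real N1 * real N2" and "P = (real N1 - real j) * (real Nw - real j)"
    and "Q = real j * (real Nb - real N1 + real j)"
  define X Y where "X = real i * (real Nw + real Nb + 1 - real i)"
    and "Y = (if i = 0 then 0 else (real N1 - real i + 1) * (real Nw - real i + 1) * real (j choose (i - 1)))"
  have "D \<noteq> 0" using assms by (simp add: D_def)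
  have pqr: "p_coef N1 N2 Nw Nb j = P / D" "q_coef N1 N2 Nw Nb j = Q / D"
    "r_coef N1 N2 Nw Nb j = 1 - P / D - Q / D"
    by (simp_all add: p_coef_def q_coef_def r_coef_def D_def P_def Q_def)
  have key: "real (Suc j choose i) * P + real ((j - 1) choose i) * Q - real (j choose i) * (P + Q)
      = Y - X * real (j choose i)"
    using binomial_urn_identity[of j i N1 Nw Nb] by (simp add: P_def Q_def X_def Y_def mult.assoc)
  have "real (j choose i) * r_coef N1 N2 Nw Nb j + real (Suc j choose i) * p_coef N1 N2 Nw Nb j
         + real ((j - 1) choose i) * q_coef N1 N2 Nw Nb j
      = real (j choose i)
        + (real (Suc j choose i) * P + real ((j - 1) choose i) * Q - real (j choose i) * (P + Q)) / D"
    unfolding pqr using \<open>D \<noteq> 0\<close> by (simp add: field_simps)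
  also have "\<dots> = (1 - X / D) * real (j choose i) + Y / D"
    unfolding key using \<open>D \<noteq> 0\<close> by (simp add: field_simps)
  finally show ?thesis
    by (simp add: D_def X_def Y_def)
qed

lemma binomial_mat_mult_T_mat:
  assumes "N1 \<ge> 1" and "N2 \<ge> 1"
  shows "binomial_mat (Nw + 1) * T_mat N1 N2 Nw Nb = urn_lower_mat N1 N2 Nw Nb * binomial_mat (Nw + 1)"
proof (rule eq_matI)
  fix i j assume "i < dim_row (urn_lower_mat N1 N2 Nw Nb * binomial_mat (Nw + 1))"
    and "j < dim_col (urn_lower_mat N1 N2 Nw Nb * binomial_mat (Nw + 1))"
  then have i: "i < Nw + 1" and j: "j \<le> Nw"
    by (simp_all add: urn_lower_mat_def lower_bidiagonal_mat_def binomial_mat_def)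
  have D: "real N1 * real N2 \<noteq> 0" using assms by simp
  have "(binomial_mat (Nw + 1) * T_mat N1 N2 Nw Nb) $$ (i, j)
      = (\<Sum>k = 0..<Nw + 1. real (k choose i) * T_mat N1 N2 Nw Nb $$ (k, j))"
    using i j by (auto simp: binomial_mat_def T_mat_def scalar_prod_def intro!: sum.cong)
  also have "\<dots> = (\<Sum>k = 0..<Nw + 1. urn_lower_mat N1 N2 Nw Nb $$ (i, k) * real (j choose k))"
    unfolding sum_mult_T_mat_col[OF j] urn_lower_mat_def sum_lower_bidiagonal_mat_row[OF i]
    by (rule binomial_weighted_T_mat_col[OF D])
  also have "\<dots> = (urn_lower_mat N1 N2 Nw Nb * binomial_mat (Nw + 1)) $$ (i, j)"
    using i j by (auto simp: binomial_mat_def urn_lower_mat_def lower_bidiagonal_mat_def scalar_prod_def intro!: sum.cong)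
  finally show "(binomial_mat (Nw + 1) * T_mat N1 N2 Nw Nb) $$ (i, j)
      = (urn_lower_mat N1 N2 Nw Nb * binomial_mat (Nw + 1)) $$ (i, j)" .
qed (simp_all add: binomial_mat_def urn_lower_mat_def lower_bidiagonal_mat_def T_mat_def)

lemma b_vec_eq_binomial_mat_mult_vec:
  assumes "c \<in> carrier_vec (Nw + 1)"
  shows "b_vec Nw c = binomial_mat (Nw + 1) *\<^sub>v c"
proof (rule eq_vecI)
  fix i assume "i < dim_vec (binomial_mat (Nw + 1) *\<^sub>v c :: real vec)"
  then have i: "i \<le> Nw" by (simp add: binomial_mat_def)
  have "(\<Sum>k = i..Nw. real (k choose i) * c $ k) = (\<Sum>k = 0..<Nw + 1. real (k choose i) * c $ k)"
    by (rule sum.mono_neutral_left) (auto simp: binomial_eq_0)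
  then show "b_vec Nw c $ i = (binomial_mat (Nw + 1) *\<^sub>v c) $ i"
    using i assms by (simp add: b_vec_def binomial_mat_def scalar_prod_def)
qed (simp add: b_vec_def binomial_mat_def)

lemma urn_lower_mat_eigenvector_iff:
  assumes "N1 \<ge> 1" and "N2 \<ge> 1" and b: "b \<in> carrier_vec (Nw + 1)"
  shows "urn_lower_mat N1 N2 Nw Nb *\<^sub>v b = lam \<cdot>\<^sub>v b \<longleftrightarrow>
    (\<forall>i \<le> Nw. real N1 * real N2 * (lam - 1) * b $ i
       = (real N1 - real i + 1) * (real Nw - real i + 1) * (if i = 0 then 0 else b $ (i - 1))
         - real i * (real Nw - real i + real Nb + 1) * b $ i)"
proof -
  have D: "real N1 * real N2 \<noteq> 0" using assms by simp
  have row: "(urn_lower_mat N1 N2 Nw Nb *\<^sub>v b) $ i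
      = (1 - real i * (real Nw - real i + real Nb + 1) / (real N1 * real N2)) * b $ i
        + (real N1 - real i + 1) * (real Nw - real i + 1) / (real N1 * real N2)
          * (if i = 0 then 0 else b $ (i - 1))" if "i \<le> Nw" for i
  proof -
    have "i < Nw + 1" using that by simp
    from lower_bidiagonal_mat_mult_vec[OF b this] show ?thesis
      by (simp add: urn_lower_mat_def add_diff_eq)
  qed
  have "(urn_lower_mat N1 N2 Nw Nb *\<^sub>v b) $ i = lam * b $ i \<longleftrightarrow>
      real N1 * real N2 * (lam - 1) * b $ i
       = (real N1 - real i + 1) * (real Nw - real i + 1) * (if i = 0 then 0 else b $ (i - 1))
         - real i * (real Nw - real i + real Nb + 1) * b $ i" if "i \<le> Nw" for i
    unfolding row[OF that] by (rule eigen_equation_clear_denominator[OF D])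
  then show ?thesis
    using b by (auto simp: vec_eq_iff urn_lower_mat_def less_Suc_eq_le)
qed

theorem mainTheorem2:
  fixes N1 N2 Nw Nb :: nat
  assumes "N1 \<ge> 1" and "N2 \<ge> 1" and "Nw + Nb = N1 + N2"
    and "Nw \<le> N1" and "Nw \<le> N2"
  shows "(\<forall>(c :: real vec) (lam :: real). c \<in> carrier_vec (Nw+1) \<longrightarrow>
           (T_mat N1 N2 Nw Nb *\<^sub>v c = lam \<cdot>\<^sub>v c \<longleftrightarrow>
            (\<forall>i \<le> Nw.
               real N1 * real N2 * (lam - 1) * (b_vec Nw c $ i)
               = (real N1 - real i + 1) * (real Nw - real i + 1)
                   * (if i = 0 then 0 else b_vec Nw c $ (i - 1))
                 - real i * (real Nw - real i + real Nb + 1) * (b_vec Nw c $ i))))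
       \<and> (\<exists>L :: real mat. L \<in> carrier_mat (Nw+1) (Nw+1) \<and>
            similar_mat (T_mat N1 N2 Nw Nb) L \<and> lower_triangular L \<and>
            (\<forall>i \<le> Nw. L $$ (i,i) = 1 - real i * (real Nw + real Nb + 1 - real i) / (real N1 * real N2)))"
proof -
  let ?B = "binomial_mat (Nw + 1) :: real mat"
  let ?L = "urn_lower_mat N1 N2 Nw Nb"
  have B: "?B \<in> carrier_mat (Nw + 1) (Nw + 1)" "det ?B \<noteq> 0"
    by (simp_all add: det_binomial_mat)
  have T: "T_mat N1 N2 Nw Nb \<in> carrier_mat (Nw + 1) (Nw + 1)"
    by (simp add: T_mat_def)
  have L: "?L \<in> carrier_mat (Nw + 1) (Nw + 1)"
    by (simp add: urn_lower_mat_def carrier_matI)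
  note BT = binomial_mat_mult_T_mat[OF assms(1,2)]
  have "T_mat N1 N2 Nw Nb *\<^sub>v c = lam \<cdot>\<^sub>v c \<longleftrightarrow> ?L *\<^sub>v b_vec Nw c = lam \<cdot>\<^sub>v b_vec Nw c"
    if c: "c \<in> carrier_vec (Nw + 1)" for c lam
    unfolding b_vec_eq_binomial_mat_mult_vec[OF c] by (rule intertwining_eigenvector_iff[OF B T L BT c])
  moreover have "b_vec Nw c \<in> carrier_vec (Nw + 1)" for c
    by (simp add: b_vec_def)
  moreover have "lower_triangular ?L"
    and "\<forall>i \<le> Nw. ?L $$ (i, i) = 1 - real i * (real Nw + real Nb + 1 - real i) / (real N1 * real N2)"
    by (simp_all add: lower_triangular_def urn_lower_mat_def lower_bidiagonal_mat_def)
  ultimately show ?thesis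
    using urn_lower_mat_eigenvector_iff[OF assms(1,2)] intertwining_similar_mat[OF B T L BT] L
    by blast
qed

end
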